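(* Let $k$ be an algebraically closed field of characteristic $0$, $R=k[x,y]$, and let $L=(x^d,x^{d-1}y^{a_1},\dots,xy^{a_{d-1}},y^{a_d})$ with $0=a_0<a_1<\dots<a_d$ be a lex-segment ideal. If $L^2=(x^d,x^{d-i}y^{a_i},y^{a_d})L$ for some $i\in\{0,\dots,d\}$, then $\operatorname{depth}\operatorname{gr}_L(R)>0$.
   Context: $\operatorname{gr}_L(R)=\bigoplus_{n\ge0}L^n/L^{n+1}$. *)

theory Defs
  imports "HOL-Computational_Algebra.Polynomial"
begin

text \<open>The bivariate polynomial ring k[x,y] is modelled as (k[y])[x], i.e. the type
  'k poly poly; x is the outer variable and y the inner one.\<close>

definition varX :: "'k::comm_ring_1 poly poly" where
  "varX = monom 1 1"

definition varY :: "'k::comm_ring_1 poly poly" where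
  "varY = [: monom 1 1 :]"

definition ideal_gen :: "'a::comm_ring_1 set \<Rightarrow> 'a set" where
  "ideal_gen S = {z. \<exists>F c. finite F \<and> F \<subseteq> S \<and> z = (\<Sum>s\<in>F. c s * s)}"

definition ideal_prod :: "'a::comm_ring_1 set \<Rightarrow> 'a set \<Rightarrow> 'a set" where
  "ideal_prod I J = ideal_gen {a * b | a b. a \<in> I \<and> b \<in> J}"

primrec ideal_pow :: "'a::comm_ring_1 set \<Rightarrow> nat \<Rightarrow> 'a set" where
  "ideal_pow I 0 = UNIV"
| "ideal_pow I (Suc n) = ideal_prod I (ideal_pow I n)"

text \<open>The associated graded ring gr_L(R) = \<oplus>_n L^n/L^{n+1}, concretely.
  An element is represented by a sequence g with g n \<in> L^n, almost all g n = 0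
  (g n represents its class in L^n/L^{n+1}).\<close>
definition gr_elem :: "'a::comm_ring_1 set \<Rightarrow> (nat \<Rightarrow> 'a) \<Rightarrow> bool" where
  "gr_elem L g \<longleftrightarrow> (\<forall>n. g n \<in> ideal_pow L n) \<and> finite {n. g n \<noteq> 0}"

definition gr_zero :: "'a::comm_ring_1 set \<Rightarrow> (nat \<Rightarrow> 'a) \<Rightarrow> bool" where
  "gr_zero L g \<longleftrightarrow> (\<forall>n. g n \<in> ideal_pow L (Suc n))"

definition gr_mult :: "(nat \<Rightarrow> 'a::comm_ring_1) \<Rightarrow> (nat \<Rightarrow> 'a) \<Rightarrow> nat \<Rightarrow> 'a" where
  "gr_mult g h n = (\<Sum>i\<le>n. g i * h (n - i))"

text \<open>The maximal homogeneous ideal of gr_L(R) for R = k[x,y] and L (x,y)-primary: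
  (x,y)/L \<oplus> L/L^2 \<oplus> L^2/L^3 \<oplus> ...\<close>
definition gr_max_ideal :: "'k::comm_ring_1 poly poly set \<Rightarrow> (nat \<Rightarrow> 'k poly poly) set" where
  "gr_max_ideal L = {g. gr_elem L g \<and> g 0 \<in> ideal_gen {varX, varY}}"

text \<open>depth gr_L(R) > 0 (depth w.r.t. the maximal homogeneous ideal): this ideal contains
  a nonzerodivisor of gr_L(R).\<close>
definition gr_depth_pos :: "'k::comm_ring_1 poly poly set \<Rightarrow> bool" where
  "gr_depth_pos L \<longleftrightarrow> (\<exists>z \<in> gr_max_ideal L. \<forall>w. gr_elem L w \<longrightarrow>
       gr_zero L (gr_mult z w) \<longrightarrow> gr_zero L w)"

end

theory Submission
  imports Defs
begin

(* The ideals L and J = (x^d, x^(d-i) y^(a_i), y^(a_d)) are monomial ideals, described by upward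
   closed exponent sets in N^2, and L^2 = JL turns into an identity of exponent sets which gives
   L^(n+1) = J^n L with an explicit exponent set. The initial form of f = x^d + y^(a_d) in L/L^2 is a
   nonzerodivisor of gr_L(R): if f w lies in L^(n+2) but w does not lie in L^(n+1), take a monomial
   x^p y^q of w outside L^(n+1) with p minimal. Cancellation in f w then forces all the monomials
   x^(p+kd) y^(q-k a_d) of w to lie outside L^(n+1) as long as q-k a_d >= 0, and the last of them
   survives in f w, which the shape of J^(n+1) L forbids. *)

lemma module_mult: "module ((*) :: 'a::comm_ring_1 \<Rightarrow> 'a \<Rightarrow> 'a)"
  by standard (simp_all add: algebra_simps)

lemma ideal_gen_eq_span: "ideal_gen S = module.span (*) S"
  by (auto simp: ideal_gen_def module.span_explicit[OF module_mult])

lemmas ideal_gen_base = module.span_base[OF module_mult, folded ideal_gen_eq_span]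
  and ideal_gen_zero = module.span_zero[OF module_mult, folded ideal_gen_eq_span]
  and ideal_gen_mult = module.span_scale[OF module_mult, folded ideal_gen_eq_span]
  and ideal_gen_sum = module.span_sum[OF module_mult, folded ideal_gen_eq_span]
  and ideal_gen_minimal = module.span_minimal[OF module_mult, folded ideal_gen_eq_span]

lemma zero_in_ideal_pow: "0 \<in> ideal_pow L n"
  by (cases n) (simp_all add: ideal_prod_def ideal_gen_zero)

lemma mem_ideal_pow_1:
  assumes "f \<in> L"
  shows "f \<in> ideal_pow L 1"
proof -
  have "f * 1 \<in> {a * b |a b. a \<in> L \<and> b \<in> UNIV}"
    using assms by blast
  then show ?thesis
    by (simp add: ideal_prod_def ideal_gen_base)
qed

definition coeff2 :: "'a::zero poly poly \<Rightarrow> nat \<Rightarrow> nat \<Rightarrow> 'a" where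
  "coeff2 P p q = coeff (coeff P p) q"

definition monom2 :: "'a::zero \<Rightarrow> nat \<Rightarrow> nat \<Rightarrow> 'a poly poly" where
  "monom2 c p q = monom (monom c q) p"

lemma coeff2_add [simp]: "coeff2 (P + Q) p q = coeff2 P p q + coeff2 Q p q"
  by (simp add: coeff2_def)

lemma coeff2_monom2: "coeff2 (monom2 c a b) p q = (if p = a \<and> q = b then c else 0)"
  by (simp add: coeff2_def monom2_def)

lemma coeff2_monom2_mult:
  "coeff2 (monom2 c a b * P) p q = (if a \<le> p \<and> b \<le> q then c * coeff2 P (p - a) (q - b) else 0)"
  by (simp add: coeff2_def monom2_def coeff_monom_mult)

lemma monom2_mult_monom2: "monom2 c a b * monom2 c' a' b' = monom2 (c * c') (a + a') (b + b')"
  by (simp add: monom2_def mult_monom add.commute)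

lemma varX_pow_mult_varY_pow: "varX ^ p * varY ^ q = (monom2 1 p q :: 'a::comm_ring_1 poly poly)"
  by (simp add: varX_def varY_def monom2_def monom_power poly_const_pow monom_0[symmetric]
      mult_monom)

lemma varX_pow: "(varX ^ p :: 'a::comm_ring_1 poly poly) = monom2 1 p 0"
  using varX_pow_mult_varY_pow[of p 0, where 'a='a] by simp

lemma varY_pow: "(varY ^ q :: 'a::comm_ring_1 poly poly) = monom2 1 0 q"
  using varX_pow_mult_varY_pow[of 0 q, where 'a='a] by simp

lemma coeff2_binomial_mult:
  "coeff2 ((varX ^ d + varY ^ D) * W) p q =
     (if d \<le> p then coeff2 W (p - d) q else 0) + (if D \<le> q then coeff2 W p (q - D) else 0)"
  by (simp add: varX_pow varY_pow distrib_right coeff2_monom2_mult)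

lemma coeff2_mult_neq_0D:
  assumes "coeff2 (P * Q) p q \<noteq> 0"
  obtains p1 q1 p2 q2 where "p1 + p2 = p" "q1 + q2 = q" "coeff2 P p1 q1 \<noteq> 0" "coeff2 Q p2 q2 \<noteq> 0"
proof -
  have "(\<Sum>i\<le>p. coeff (coeff P i * coeff Q (p - i)) q) \<noteq> 0"
    using assms by (simp add: coeff2_def coeff_mult coeff_sum)
  then obtain i where i: "i \<le> p" "coeff (coeff P i * coeff Q (p - i)) q \<noteq> 0"
    by (meson atMost_iff sum.neutral)
  then have "(\<Sum>j\<le>q. coeff (coeff P i) j * coeff (coeff Q (p - i)) (q - j)) \<noteq> 0"
    by (simp add: coeff_mult)
  then obtain j where "j \<le> q" "coeff (coeff P i) j * coeff (coeff Q (p - i)) (q - j) \<noteq> 0"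
    by (meson atMost_iff sum.neutral)
  with i show thesis
    by (intro that[of i "p - i" j "q - j"]) (auto simp: coeff2_def)
qed

lemma sum_monom2_coeff2: "(\<Sum>p\<le>degree P. \<Sum>q\<le>degree (coeff P p). monom2 (coeff2 P p q) p q) = P"
  by (simp add: monom2_def coeff2_def monom_sum[symmetric] poly_as_sum_of_monoms)

section \<open>Monomial ideals and exponent sets\<close>

definition monomial_ideal :: "(nat \<Rightarrow> nat \<Rightarrow> bool) \<Rightarrow> 'a::comm_ring_1 poly poly set" where
  "monomial_ideal E = {P. \<forall>p q. coeff2 P p q \<noteq> 0 \<longrightarrow> E p q}"

definition upclosed :: "(nat \<Rightarrow> nat \<Rightarrow> bool) \<Rightarrow> bool" where
  "upclosed E \<longleftrightarrow> (\<forall>p q p' q'. E p q \<longrightarrow> p \<le> p' \<longrightarrow> q \<le> q' \<longrightarrow> E p' q')"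

lemma upclosedD: "upclosed E \<Longrightarrow> E p q \<Longrightarrow> p \<le> p' \<Longrightarrow> q \<le> q' \<Longrightarrow> E p' q'"
  unfolding upclosed_def by blast

definition up_closure :: "(nat \<times> nat) set \<Rightarrow> nat \<Rightarrow> nat \<Rightarrow> bool" where
  "up_closure G p q \<longleftrightarrow> (\<exists>a b. (a, b) \<in> G \<and> a \<le> p \<and> b \<le> q)"

definition exp_sum :: "(nat \<Rightarrow> nat \<Rightarrow> bool) \<Rightarrow> (nat \<Rightarrow> nat \<Rightarrow> bool) \<Rightarrow> nat \<Rightarrow> nat \<Rightarrow> bool" where
  "exp_sum A B p q \<longleftrightarrow> (\<exists>p1 q1 p2 q2. A p1 q1 \<and> B p2 q2 \<and> p1 + p2 \<le> p \<and> q1 + q2 \<le> q)"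

lemma exp_sum_exp_sum_iff:
  "exp_sum (exp_sum A B) C p q \<longleftrightarrow>
    (\<exists>p1 q1 p2 q2 p3 q3. A p1 q1 \<and> B p2 q2 \<and> C p3 q3 \<and> p1 + p2 + p3 \<le> p \<and> q1 + q2 + q3 \<le> q)"
proof
  assume "exp_sum (exp_sum A B) C p q"
  then obtain p1 q1 p2 q2 p3 q3 where "A p1 q1" "B p2 q2" "C p3 q3" "p1 + p2 + p3 \<le> p" "q1 + q2 + q3 \<le> q"
    unfolding exp_sum_def by (metis add_le_mono1 order_trans)
  then show "\<exists>p1 q1 p2 q2 p3 q3. A p1 q1 \<and> B p2 q2 \<and> C p3 q3 \<and> p1 + p2 + p3 \<le> p \<and> q1 + q2 + q3 \<le> q"
    by blast
next
  assume "\<exists>p1 q1 p2 q2 p3 q3. A p1 q1 \<and> B p2 q2 \<and> C p3 q3 \<and> p1 + p2 + p3 \<le> p \<and> q1 + q2 + q3 \<le> q"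
  then obtain p1 q1 p2 q2 p3 q3 where "A p1 q1" "B p2 q2" "C p3 q3" "p1 + p2 + p3 \<le> p" "q1 + q2 + q3 \<le> q"
    by blast
  moreover have "exp_sum A B (p1 + p2) (q1 + q2)"
    using \<open>A p1 q1\<close> \<open>B p2 q2\<close> unfolding exp_sum_def by blast
  ultimately show "exp_sum (exp_sum A B) C p q"
    by (subst exp_sum_def) blast
qed

lemma exp_sum_rotate: "exp_sum (exp_sum A B) C p q \<Longrightarrow> exp_sum (exp_sum B C) A p q"
  unfolding exp_sum_exp_sum_iff
proof (elim exE conjE)
  fix p1 q1 p2 q2 p3 q3
  assume "A p1 q1" "B p2 q2" "C p3 q3" "p1 + p2 + p3 \<le> p" "q1 + q2 + q3 \<le> q"
  moreover have "p2 + p3 + p1 \<le> p" "q2 + q3 + q1 \<le> q"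
    using calculation(4,5) by linarith+
  ultimately show "\<exists>p1 q1 p2 q2 p3 q3. B p1 q1 \<and> C p2 q2 \<and> A p3 q3 \<and> p1 + p2 + p3 \<le> p \<and> q1 + q2 + q3 \<le> q"
    by blast
qed

lemma exp_sum_commute: "exp_sum A B = exp_sum B A"
  unfolding exp_sum_def by (intro ext) (metis add.commute)

lemma exp_sum_assoc: "exp_sum (exp_sum A B) C = exp_sum A (exp_sum B C)"
proof -
  have "exp_sum (exp_sum A B) C = exp_sum (exp_sum B C) A"
    by (intro ext iffI) (auto intro: exp_sum_rotate)
  then show ?thesis
    by (simp only: exp_sum_commute[of A "exp_sum B C"])
qed

lemma upclosed_up_closure: "upclosed (up_closure G)"
  unfolding upclosed_def up_closure_def by (meson order_trans)

lemma upclosed_exp_sum: "upclosed (exp_sum A B)"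
  unfolding upclosed_def exp_sum_def by (meson order_trans)

lemma up_closure_le:
  assumes "up_closure G p q" "upclosed E" "\<And>a b. (a, b) \<in> G \<Longrightarrow> E a b"
  shows "E p q"
  using assms unfolding up_closure_def upclosed_def by blast

lemma exp_sum_top:
  assumes "upclosed E"
  shows "exp_sum (\<lambda>_ _. True) E = E"
proof (intro ext iffI)
  fix p q
  assume "exp_sum (\<lambda>_ _. True) E p q"
  then obtain p1 q1 p2 q2 where "E p2 q2" "p1 + p2 \<le> p" "q1 + q2 \<le> q"
    by (auto simp: exp_sum_def)
  moreover from this(2,3) have "p2 \<le> p" "q2 \<le> q"
    by linarith+
  ultimately show "E p q"
    using upclosedD[OF assms] by blast
next
  fix p q
  assume "E p q"
  moreover have "0 + p \<le> p" "0 + q \<le> q"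
    by simp_all
  ultimately show "exp_sum (\<lambda>_ _. True) E p q"
    unfolding exp_sum_def by blast
qed

lemma subspace_monomial_ideal:
  assumes "upclosed E"
  shows "module.subspace (*) (monomial_ideal E :: 'a::comm_ring_1 poly poly set)"
proof (rule module.subspaceI[OF module_mult])
  show "P + Q \<in> monomial_ideal E" if "P \<in> monomial_ideal E" "Q \<in> monomial_ideal E" for P Q :: "'a poly poly"
  proof -
    have "coeff2 P p q \<noteq> 0 \<or> coeff2 Q p q \<noteq> 0" if "coeff2 (P + Q) p q \<noteq> 0" for p q
      using that by auto
    with \<open>P \<in> monomial_ideal E\<close> \<open>Q \<in> monomial_ideal E\<close> show ?thesis
      unfolding monomial_ideal_def by blast
  qed
  show "R * P \<in> monomial_ideal E" if "P \<in> monomial_ideal E" for R P :: "'a poly poly"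
  proof -
    have "E p q" if "coeff2 (R * P) p q \<noteq> 0" for p q
    proof -
      obtain p1 q1 p2 q2 where "p1 + p2 = p" "q1 + q2 = q" "coeff2 P p2 q2 \<noteq> 0"
        using \<open>coeff2 (R * P) p q \<noteq> 0\<close> by (rule coeff2_mult_neq_0D)
      moreover from this(3) \<open>P \<in> monomial_ideal E\<close> have "E p2 q2"
        unfolding monomial_ideal_def by blast
      ultimately show ?thesis
        using upclosedD[OF assms, of p2 q2 p q] by simp
    qed
    then show ?thesis by (simp add: monomial_ideal_def)
  qed
qed (simp add: monomial_ideal_def coeff2_def)

lemma monom2_in_monomial_ideal_iff: "(monom2 1 p q :: 'a::comm_ring_1 poly poly) \<in> monomial_ideal E \<longleftrightarrow> E p q"
  by (auto simp: monomial_ideal_def coeff2_monom2)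

lemma monomial_ideal_eq_iff: "(monomial_ideal A :: 'a::comm_ring_1 poly poly set) = monomial_ideal B \<longleftrightarrow> A = B"
proof
  assume eq: "(monomial_ideal A :: 'a poly poly set) = monomial_ideal B"
  show "A = B"
  proof (intro ext)
    show "A p q = B p q" for p q
      using monom2_in_monomial_ideal_iff[of p q A, where 'a='a] monom2_in_monomial_ideal_iff[of p q B, where 'a='a]
      by (simp add: eq)
  qed
qed simp

lemma monomial_ideal_subset_ideal_gen:
  assumes "\<And>p q. E p q \<Longrightarrow> (monom2 1 p q :: 'a::comm_ring_1 poly poly) \<in> ideal_gen S"
  shows "monomial_ideal E \<subseteq> ideal_gen S"
proof
  fix P :: "'a poly poly"
  assume P: "P \<in> monomial_ideal E"
  have "monom2 (coeff2 P p q) p q \<in> ideal_gen S" for p q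
  proof (cases "coeff2 P p q = 0")
    case False
    then have "monom2 (coeff2 P p q) 0 0 * monom2 1 p q \<in> ideal_gen S"
      using P assms by (auto simp: monomial_ideal_def intro: ideal_gen_mult)
    then show ?thesis by (simp add: monom2_mult_monom2)
  qed (simp add: monom2_def ideal_gen_zero)
  then show "P \<in> ideal_gen S"
    by (subst sum_monom2_coeff2[symmetric]) (intro ideal_gen_sum)
qed

lemma ideal_gen_monomials:
  "ideal_gen ((\<lambda>(p, q). varX ^ p * varY ^ q) ` G) = (monomial_ideal (up_closure G) :: 'a::comm_ring_1 poly poly set)"
proof
  show "ideal_gen ((\<lambda>(p, q). varX ^ p * varY ^ q) ` G) \<subseteq> (monomial_ideal (up_closure G) :: 'a poly poly set)"
  proof (rule ideal_gen_minimal[OF _ subspace_monomial_ideal[OF upclosed_up_closure]])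
    have "up_closure G p q" if "(p, q) \<in> G" for p q
      using that unfolding up_closure_def by blast
    then show "(\<lambda>(p, q). varX ^ p * varY ^ q) ` G \<subseteq> (monomial_ideal (up_closure G) :: 'a poly poly set)"
      by (auto simp: varX_pow_mult_varY_pow monom2_in_monomial_ideal_iff)
  qed
  show "(monomial_ideal (up_closure G) :: 'a poly poly set) \<subseteq> ideal_gen ((\<lambda>(p, q). varX ^ p * varY ^ q) ` G)"
  proof (rule monomial_ideal_subset_ideal_gen)
    fix p q
    assume "up_closure G p q"
    then obtain a b where ab: "(a, b) \<in> G" "a \<le> p" "b \<le> q"
      by (auto simp: up_closure_def)
    then have "monom2 1 (p - a) (q - b) * monom2 1 a b
        \<in> ideal_gen ((\<lambda>(p, q). varX ^ p * varY ^ q) ` G :: 'a poly poly set)"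
      by (intro ideal_gen_mult ideal_gen_base) (force simp: varX_pow_mult_varY_pow)
    with ab show "monom2 1 p q \<in> ideal_gen ((\<lambda>(p, q). varX ^ p * varY ^ q) ` G :: 'a poly poly set)"
      by (simp add: monom2_mult_monom2)
  qed
qed

lemma monomial_ideal_prod:
  "ideal_prod (monomial_ideal A) (monomial_ideal B) = (monomial_ideal (exp_sum A B) :: 'a::comm_ring_1 poly poly set)"
proof
  have "P * Q \<in> monomial_ideal (exp_sum A B)" if "P \<in> monomial_ideal A" "Q \<in> monomial_ideal B"
    for P Q :: "'a poly poly"
    using that unfolding monomial_ideal_def exp_sum_def by (auto elim!: coeff2_mult_neq_0D) fastforce
  then show "ideal_prod (monomial_ideal A) (monomial_ideal B) \<subseteq> (monomial_ideal (exp_sum A B) :: 'a poly poly set)"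
    unfolding ideal_prod_def
    by (intro ideal_gen_minimal subspace_monomial_ideal upclosed_exp_sum) blast
  show "(monomial_ideal (exp_sum A B) :: 'a poly poly set) \<subseteq> ideal_prod (monomial_ideal A) (monomial_ideal B)"
    unfolding ideal_prod_def
  proof (rule monomial_ideal_subset_ideal_gen)
    fix p q
    assume "exp_sum A B p q"
    then obtain p1 q1 p2 q2 where h: "A p1 q1" "B p2 q2" "p1 + p2 \<le> p" "q1 + q2 \<le> q"
      by (auto simp: exp_sum_def)
    then have "monom2 1 p1 q1 \<in> (monomial_ideal A :: 'a poly poly set)" "monom2 1 p2 q2 \<in> (monomial_ideal B :: 'a poly poly set)"
      by (simp_all add: monom2_in_monomial_ideal_iff)
    then have "monom2 1 (p - p1 - p2) (q - q1 - q2) * (monom2 1 p1 q1 * monom2 1 p2 q2)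
        \<in> ideal_gen {P * Q |P Q. P \<in> (monomial_ideal A :: 'a poly poly set) \<and> Q \<in> monomial_ideal B}"
      by (intro ideal_gen_mult ideal_gen_base) blast
    with h show "monom2 1 p q
        \<in> ideal_gen {P * Q |P Q. P \<in> (monomial_ideal A :: 'a poly poly set) \<and> Q \<in> monomial_ideal B}"
      by (simp add: monom2_mult_monom2)
  qed
qed

lemma ideal_prod_monomial_ideal_UNIV:
  assumes "upclosed E"
  shows "ideal_prod (monomial_ideal E) UNIV = (monomial_ideal E :: 'a::comm_ring_1 poly poly set)"
proof -
  have "(monomial_ideal (\<lambda>_ _. True) :: 'a poly poly set) = UNIV"
    by (simp add: monomial_ideal_def)
  then show ?thesis
    using monomial_ideal_prod[of E "\<lambda>_ _. True", where 'a='a] assms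
    by (simp add: exp_sum_commute[of E] exp_sum_top)
qed

section \<open>Powers of L when L^2 = JL\<close>

(* The exponent set of J^k for J = (x^d, x^e y^c, y^D). *)
definition triple_pow_exps :: "nat \<Rightarrow> nat \<Rightarrow> nat \<Rightarrow> nat \<Rightarrow> nat \<Rightarrow> nat \<Rightarrow> nat \<Rightarrow> bool" where
  "triple_pow_exps d e c D k p q \<longleftrightarrow>
     (\<exists>\<alpha> \<beta> \<gamma>. \<alpha> + \<beta> + \<gamma> = k \<and> \<alpha> * d + \<beta> * e \<le> p \<and> \<beta> * c + \<gamma> * D \<le> q)"

lemma triple_pow_exps_0: "triple_pow_exps d e c D 0 = (\<lambda>_ _. True)"
  by (simp add: triple_pow_exps_def fun_eq_iff)

lemma exp_sum_up_closure_triple_pow_exps: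
  assumes "exp_sum (up_closure {(d, 0), (e, c), (0, D)}) (triple_pow_exps d e c D k) p q"
  shows "triple_pow_exps d e c D (Suc k) p q"
proof -
  obtain p1 q1 p2 q2 \<alpha> \<beta> \<gamma> where gen: "up_closure {(d, 0), (e, c), (0, D)} p1 q1"
      and h: "p1 + p2 \<le> p" "q1 + q2 \<le> q" "\<alpha> + \<beta> + \<gamma> = k" "\<alpha> * d + \<beta> * e \<le> p2" "\<beta> * c + \<gamma> * D \<le> q2"
    using assms unfolding exp_sum_def triple_pow_exps_def by blast
  from gen consider "d \<le> p1" | "e \<le> p1" "c \<le> q1" | "D \<le> q1"
    by (auto simp: up_closure_def)
  then show ?thesis
  proof cases
    case 1
    with h have "Suc \<alpha> + \<beta> + \<gamma> = Suc k \<and> Suc \<alpha> * d + \<beta> * e \<le> p \<and> \<beta> * c + \<gamma> * D \<le> q"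
      by auto
    then show ?thesis
      unfolding triple_pow_exps_def by blast
  next
    case 2
    with h have "\<alpha> + Suc \<beta> + \<gamma> = Suc k \<and> \<alpha> * d + Suc \<beta> * e \<le> p \<and> Suc \<beta> * c + \<gamma> * D \<le> q"
      by auto
    then show ?thesis
      unfolding triple_pow_exps_def by blast
  next
    case 3
    with h have "\<alpha> + \<beta> + Suc \<gamma> = Suc k \<and> \<alpha> * d + \<beta> * e \<le> p \<and> \<beta> * c + Suc \<gamma> * D \<le> q"
      by auto
    then show ?thesis
      unfolding triple_pow_exps_def by blast
  qed
qed

lemma triple_pow_exps_Suc_imp_exp_sum:
  assumes "triple_pow_exps d e c D (Suc k) p q"
  shows "exp_sum (up_closure {(d, 0), (e, c), (0, D)}) (triple_pow_exps d e c D k) p q"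
proof -
  obtain \<alpha> \<beta> \<gamma> where h: "\<alpha> + \<beta> + \<gamma> = Suc k" "\<alpha> * d + \<beta> * e \<le> p" "\<beta> * c + \<gamma> * D \<le> q"
    using assms by (auto simp: triple_pow_exps_def)
  have gen: "up_closure {(d, 0), (e, c), (0, D)} a b" if "(a, b) \<in> {(d, 0), (e, c), (0, D)}" for a b
    using that unfolding up_closure_def by blast
  consider \<alpha>' where "\<alpha> = Suc \<alpha>'" | \<beta>' where "\<beta> = Suc \<beta>'" | \<gamma>' where "\<gamma> = Suc \<gamma>'"
    using h(1) by (metis add_is_0 not0_implies_Suc)
  then show ?thesis
  proof cases
    case 1
    with h have "triple_pow_exps d e c D k (\<alpha>' * d + \<beta> * e) (\<beta> * c + \<gamma> * D)"
        "d + (\<alpha>' * d + \<beta> * e) \<le> p" "0 + (\<beta> * c + \<gamma> * D) \<le> q"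
      unfolding triple_pow_exps_def by auto
    with gen[of d 0] show ?thesis
      unfolding exp_sum_def by blast
  next
    case 2
    with h have "triple_pow_exps d e c D k (\<alpha> * d + \<beta>' * e) (\<beta>' * c + \<gamma> * D)"
        "e + (\<alpha> * d + \<beta>' * e) \<le> p" "c + (\<beta>' * c + \<gamma> * D) \<le> q"
      unfolding triple_pow_exps_def by auto
    with gen[of e c] show ?thesis
      unfolding exp_sum_def by blast
  next
    case 3
    with h have "triple_pow_exps d e c D k (\<alpha> * d + \<beta> * e) (\<beta> * c + \<gamma>' * D)"
        "0 + (\<alpha> * d + \<beta> * e) \<le> p" "D + (\<beta> * c + \<gamma>' * D) \<le> q"
      unfolding triple_pow_exps_def by auto
    with gen[of 0 D] show ?thesis
      unfolding exp_sum_def by blast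
  qed
qed

lemma triple_pow_exps_Suc:
  "triple_pow_exps d e c D (Suc k) = exp_sum (up_closure {(d, 0), (e, c), (0, D)}) (triple_pow_exps d e c D k)"
  by (intro ext iffI) (simp_all add: exp_sum_up_closure_triple_pow_exps triple_pow_exps_Suc_imp_exp_sum)

lemma ideal_pow_Suc_monomial_ideal:
  fixes d e c D :: nat and E :: "nat \<Rightarrow> nat \<Rightarrow> bool"
  defines "J \<equiv> up_closure {(d, 0), (e, c), (0, D)}"
  assumes upclosed: "upclosed E"
    and L_square: "ideal_pow (monomial_ideal E :: 'a::comm_ring_1 poly poly set) 2
      = ideal_prod (monomial_ideal J) (monomial_ideal E)"
  shows "ideal_pow (monomial_ideal E) (Suc k)
    = (monomial_ideal (exp_sum (triple_pow_exps d e c D k) E) :: 'a poly poly set)"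
proof -
  have "(monomial_ideal (exp_sum E E) :: 'a poly poly set) = monomial_ideal (exp_sum J E)"
    using upclosed L_square
    by (simp add: numeral_2_eq_2 ideal_prod_monomial_ideal_UNIV monomial_ideal_prod)
  then have square: "exp_sum E E = exp_sum J E"
    by (simp only: monomial_ideal_eq_iff)
  show ?thesis
  proof (induction k)
    case 0
    show ?case
      using upclosed by (simp add: ideal_prod_monomial_ideal_UNIV triple_pow_exps_0 exp_sum_top)
  next
    case (Suc k)
    let ?T = "triple_pow_exps d e c D k"
    have "ideal_pow (monomial_ideal E :: 'a poly poly set) (Suc (Suc k))
        = ideal_prod (monomial_ideal E) (ideal_pow (monomial_ideal E) (Suc k))"
      by (rule ideal_pow.simps(2))
    also have "\<dots> = ideal_prod (monomial_ideal E) (monomial_ideal (exp_sum ?T E))"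
      by (simp only: Suc.IH)
    also have "\<dots> = monomial_ideal (exp_sum (exp_sum ?T E) E)"
      by (simp only: monomial_ideal_prod exp_sum_commute[of E])
    also have "\<dots> = monomial_ideal (exp_sum (exp_sum ?T J) E)"
      by (simp only: exp_sum_assoc square)
    also have "\<dots> = monomial_ideal (exp_sum (triple_pow_exps d e c D (Suc k)) E)"
      by (simp only: triple_pow_exps_Suc exp_sum_commute[of ?T] J_def)
    finally show ?case .
  qed
qed

lemma exp_sum_triple_pow_expsI:
  "\<alpha> + \<beta> + \<gamma> = n \<Longrightarrow> E s t \<Longrightarrow> \<alpha> * d + \<beta> * e + s \<le> p \<Longrightarrow> \<beta> * c + \<gamma> * D + t \<le> q \<Longrightarrow>
    exp_sum (triple_pow_exps d e c D n) E p q"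
  unfolding exp_sum_def triple_pow_exps_def by blast

lemma exp_sum_triple_pow_expsE:
  assumes "exp_sum (triple_pow_exps d e c D n) E p q"
  obtains \<alpha> \<beta> \<gamma> s t where "\<alpha> + \<beta> + \<gamma> = n" "E s t" "\<alpha> * d + \<beta> * e + s \<le> p" "\<beta> * c + \<gamma> * D + t \<le> q"
proof -
  obtain p1 q1 p2 q2 \<alpha> \<beta> \<gamma> where "E p2 q2" "p1 + p2 \<le> p" "q1 + q2 \<le> q"
      "\<alpha> + \<beta> + \<gamma> = n" "\<alpha> * d + \<beta> * e \<le> p1" "\<beta> * c + \<gamma> * D \<le> q1"
    using assms unfolding exp_sum_def triple_pow_exps_def by blast
  then show thesis
    by (intro that[of \<alpha> \<beta> \<gamma> p2 q2]) auto
qed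

lemma exp_sum_triple_pow_exps_shift_x:
  assumes "exp_sum (triple_pow_exps d e c D n) E p q"
  shows "exp_sum (triple_pow_exps d e c D (Suc n)) E (p + d) q"
proof -
  obtain \<alpha> \<beta> \<gamma> s t where "\<alpha> + \<beta> + \<gamma> = n" "E s t" "\<alpha> * d + \<beta> * e + s \<le> p" "\<beta> * c + \<gamma> * D + t \<le> q"
    using assms by (rule exp_sum_triple_pow_expsE)
  then show ?thesis
    by (intro exp_sum_triple_pow_expsI[of "Suc \<alpha>" \<beta> \<gamma>]) auto
qed

lemma exp_sum_triple_pow_exps_shift_y:
  assumes "exp_sum (triple_pow_exps d e c D n) E p q"
  shows "exp_sum (triple_pow_exps d e c D (Suc n)) E p (q + D)"
proof -
  obtain \<alpha> \<beta> \<gamma> s t where "\<alpha> + \<beta> + \<gamma> = n" "E s t" "\<alpha> * d + \<beta> * e + s \<le> p" "\<beta> * c + \<gamma> * D + t \<le> q"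
    using assms by (rule exp_sum_triple_pow_expsE)
  then show ?thesis
    by (intro exp_sum_triple_pow_expsI[of \<alpha> \<beta> "Suc \<gamma>"]) auto
qed

lemma triple_pow_exps_Suc_le_exp_sum:
  assumes "upclosed E" "E d 0" "E e c" "E 0 D" "triple_pow_exps d e c D (Suc n) p q"
  shows "exp_sum (triple_pow_exps d e c D n) E p q"
proof -
  obtain p1 q1 p2 q2 where "up_closure {(d, 0), (e, c), (0, D)} p1 q1" "triple_pow_exps d e c D n p2 q2"
      "p1 + p2 \<le> p" "q1 + q2 \<le> q"
    using triple_pow_exps_Suc_imp_exp_sum[OF assms(5)] unfolding exp_sum_def by blast
  moreover from this(1) have "E p1 q1"
    by (rule up_closure_le) (use assms(1-4) in auto)
  moreover from calculation(3,4) have "p2 + p1 \<le> p" "q2 + q1 \<le> q"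
    by simp_all
  ultimately show ?thesis
    unfolding exp_sum_def by blast
qed

(* If a representation of one point used its last generator y^D resp. x^d, the lower point would
   lie in J^n E. Otherwise, comparing the numbers of factors x^e y^c, the J^(n+1) part of one
   representation alone reaches the corresponding lower point, and J^(n+1) lies in J^n E. *)
lemma exp_sum_triple_pow_exps_no_run:
  assumes "upclosed E" "E d 0" "E e c" "E 0 D"
    and "exp_sum (triple_pow_exps d e c D (Suc n)) E p (q + k * D + D)"
    and "exp_sum (triple_pow_exps d e c D (Suc n)) E (p + k * d + d) q"
  shows "exp_sum (triple_pow_exps d e c D n) E p (q + k * D) \<or>
    exp_sum (triple_pow_exps d e c D n) E (p + k * d) q"
proof -
  obtain \<alpha>1 \<beta>1 \<gamma>1 s1 t1 where r1: "\<alpha>1 + \<beta>1 + \<gamma>1 = Suc n" "E s1 t1"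
      "\<alpha>1 * d + \<beta>1 * e + s1 \<le> p" "\<beta>1 * c + \<gamma>1 * D + t1 \<le> q + k * D + D"
    using assms(5) by (rule exp_sum_triple_pow_expsE)
  obtain \<alpha>2 \<beta>2 \<gamma>2 s2 t2 where r2: "\<alpha>2 + \<beta>2 + \<gamma>2 = Suc n" "E s2 t2"
      "\<alpha>2 * d + \<beta>2 * e + s2 \<le> p + k * d + d" "\<beta>2 * c + \<gamma>2 * D + t2 \<le> q"
    using assms(6) by (rule exp_sum_triple_pow_expsE)
  consider \<gamma> where "\<gamma>1 = Suc \<gamma>" | \<alpha> where "\<alpha>2 = Suc \<alpha>" | "\<gamma>1 = 0" "\<alpha>2 = 0" "\<beta>1 \<le> \<beta>2"
    | "\<gamma>1 = 0" "\<alpha>2 = 0" "\<beta>2 \<le> \<beta>1"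
    by (metis nat.exhaust nat_le_linear)
  then show ?thesis
  proof cases
    case 1
    with r1 show ?thesis
      by (intro disjI1 exp_sum_triple_pow_expsI[of \<alpha>1 \<beta>1 \<gamma>]) auto
  next
    case 2
    with r2 show ?thesis
      by (intro disjI2 exp_sum_triple_pow_expsI[of \<alpha> \<beta>2 \<gamma>2]) auto
  next
    case 3
    then have "\<beta>1 * c \<le> q"
      using r2(4) mult_le_mono1[of \<beta>1 \<beta>2 c] by linarith
    with 3 r1 have "triple_pow_exps d e c D (Suc n) p (q + k * D)"
      unfolding triple_pow_exps_def by (intro exI[of _ \<alpha>1] exI[of _ \<beta>1] exI[of _ 0]) auto
    then show ?thesis
      using triple_pow_exps_Suc_le_exp_sum assms(1-4) by blast
  next
    case 4
    then have "\<beta>2 * e \<le> p"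
      using r1(3) mult_le_mono1[of \<beta>2 \<beta>1 e] by linarith
    with 4 r2 have "triple_pow_exps d e c D (Suc n) (p + k * d) q"
      unfolding triple_pow_exps_def by (intro exI[of _ 0] exI[of _ \<beta>2] exI[of _ \<gamma>2]) auto
    then show ?thesis
      using triple_pow_exps_Suc_le_exp_sum assms(1-4) by blast
  qed
qed

section \<open>Multiplication by x^d + y^D\<close>

lemma binomial_cancellation_run:
  fixes W :: "'a::comm_ring_1 poly poly"
  assumes "0 < D"
    and fW: "(varX ^ d + varY ^ D) * W \<in> monomial_ideal I"
    and shift_y: "\<And>p q. I' p q \<Longrightarrow> I p (q + D)"
    and start: "coeff2 W s t \<noteq> 0" "\<not> I' s t"
    and blocked: "\<And>k q. q + k * D = t \<Longrightarrow> \<not> I' (s + k * d) q \<Longrightarrow> \<not> I (s + k * d + d) q"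
  shows False
proof -
  have fW_coeff: "coeff2 ((varX ^ d + varY ^ D) * W) p q = 0" if "\<not> I p q" for p q
    using fW that by (auto simp: monomial_ideal_def)
  (* The coefficient of x^(s+kd+d) y^(q+D) in (x^d + y^D) W is W(s+kd, q+D) + W(s+kd+d, q) and
     vanishes by blocked, so a nonzero coefficient outside I' moves from (s, t) to (s + kd, t - kD). *)
  have run: "coeff2 W (s + k * d) q \<noteq> 0 \<and> \<not> I' (s + k * d) q" if "q + k * D = t" for k q
    using that
  proof (induction k arbitrary: q)
    case 0
    then show ?case
      using start by simp
  next
    case (Suc k)
    have IH: "coeff2 W (s + k * d) (q + D) \<noteq> 0" "\<not> I' (s + k * d) (q + D)"
      using Suc.IH[of "q + D"] Suc.prems by (simp_all add: algebra_simps)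
    then have "\<not> I (s + k * d + d) (q + D)"
      using blocked[of "q + D" k] Suc.prems by (simp add: algebra_simps)
    then have "coeff2 W (s + k * d) (q + D) + coeff2 W (s + k * d + d) q = 0"
      using fW_coeff[of "s + k * d + d" "q + D"] by (simp add: coeff2_binomial_mult)
    moreover have "\<not> I' (s + k * d + d) q"
      using shift_y \<open>\<not> I (s + k * d + d) (q + D)\<close> by blast
    ultimately show ?case
      using IH(1) by (auto simp: algebra_simps)
  qed
  define K r where "K = t div D" and "r = t mod D"
  have "r + K * D = t"
    by (simp add: K_def r_def)
  then have "coeff2 W (s + K * d) r \<noteq> 0" "\<not> I (s + K * d + d) r"
    using run blocked by blast+
  moreover have "r < D"
    using \<open>0 < D\<close> by (simp add: r_def)
  ultimately show False
    using fW_coeff[of "s + K * d + d" r] by (simp add: coeff2_binomial_mult)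
qed

lemma monomial_ideal_colon_binomial:
  fixes W :: "'a::comm_ring_1 poly poly" and I I' :: "nat \<Rightarrow> nat \<Rightarrow> bool"
  assumes "0 < d" "0 < D"
    and shift_x: "\<And>p q. I' p q \<Longrightarrow> I (p + d) q"
    and shift_y: "\<And>p q. I' p q \<Longrightarrow> I p (q + D)"
    and no_run: "\<And>p q k. I p (q + k * D + D) \<Longrightarrow> I (p + k * d + d) q \<Longrightarrow>
                   I' p (q + k * D) \<or> I' (p + k * d) q"
    and fW: "(varX ^ d + varY ^ D) * W \<in> monomial_ideal I"
  shows "W \<in> monomial_ideal I'"
proof (rule ccontr)
  define bad where "bad p q \<longleftrightarrow> coeff2 W p q \<noteq> 0 \<and> \<not> I' p q" for p q
  assume "W \<notin> monomial_ideal I'"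
  then have "\<exists>p q. bad p q"
    by (auto simp: monomial_ideal_def bad_def)
  then obtain p0 where "\<exists>q. bad p0 q" and least: "\<And>p q. p < p0 \<Longrightarrow> \<not> bad p q"
    using exists_least_iff[of "\<lambda>p. \<exists>q. bad p q"] by blast
  then obtain q0 where bad0: "coeff2 W p0 q0 \<noteq> 0" "\<not> I' p0 q0"
    unfolding bad_def by blast
  have top: "I p0 (q0 + D)"
  proof (rule ccontr)
    assume "\<not> I p0 (q0 + D)"
    with fW have "coeff2 ((varX ^ d + varY ^ D) * W) p0 (q0 + D) = 0"
      by (auto simp: monomial_ideal_def)
    then have "(if d \<le> p0 then coeff2 W (p0 - d) (q0 + D) else 0) + coeff2 W p0 q0 = 0"
      by (simp add: coeff2_binomial_mult)
    with bad0 have "d \<le> p0" "coeff2 W (p0 - d) (q0 + D) \<noteq> 0"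
      by (auto split: if_splits)
    moreover have "p0 - d < p0"
      using \<open>d \<le> p0\<close> \<open>0 < d\<close> by linarith
    ultimately have "I' (p0 - d) (q0 + D)"
      using least bad_def by blast
    with \<open>d \<le> p0\<close> \<open>\<not> I p0 (q0 + D)\<close> show False
      using shift_x[of "p0 - d" "q0 + D"] by simp
  qed
  show False
  proof (rule binomial_cancellation_run[where I = I and I' = I' and W = W and s = p0 and t = q0,
        OF \<open>0 < D\<close> fW shift_y bad0])
    show "\<not> I (p0 + k * d + d) q" if "q + k * D = q0" "\<not> I' (p0 + k * d) q" for k q
    proof
      assume "I (p0 + k * d + d) q"
      with top that(1) have "I' p0 q0 \<or> I' (p0 + k * d) q"
        using no_run[of p0 q k] by auto
      with bad0(2) that(2) show False
        by blast
    qed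
  qed
qed

lemma triple_pow_exps_colon_binomial:
  fixes W :: "'a::comm_ring_1 poly poly"
  assumes "upclosed E" "E d 0" "E e c" "E 0 D"
    and "(varX ^ d + varY ^ D) * W \<in> monomial_ideal (exp_sum (triple_pow_exps d e c D (Suc n)) E)"
  shows "W \<in> monomial_ideal (exp_sum (triple_pow_exps d e c D n) E)"
proof (cases "d = 0 \<or> D = 0")
  case True
  have "exp_sum (triple_pow_exps d e c D n) E p q" for p q
  proof -
    have "E p q"
      using True assms(1,2,4) unfolding upclosed_def by blast
    with True show ?thesis
      by (auto intro: exp_sum_triple_pow_expsI[of n 0 0] exp_sum_triple_pow_expsI[of 0 0 n])
  qed
  then show ?thesis
    by (simp add: monomial_ideal_def)
next
  case False
  show ?thesis
  proof (rule monomial_ideal_colon_binomial[OF _ _ _ _ _ assms(5)])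
    show "0 < d" "0 < D"
      using False by auto
    show "exp_sum (triple_pow_exps d e c D n) E p (q + k * D) \<or>
        exp_sum (triple_pow_exps d e c D n) E (p + k * d) q"
      if "exp_sum (triple_pow_exps d e c D (Suc n)) E p (q + k * D + D)"
        "exp_sum (triple_pow_exps d e c D (Suc n)) E (p + k * d + d) q" for p q k
      using exp_sum_triple_pow_exps_no_run[OF assms(1-4) that] .
  qed (fact exp_sum_triple_pow_exps_shift_x exp_sum_triple_pow_exps_shift_y)+
qed

lemma gr_depth_pos_if_initial_form_regular:
  fixes L :: "'k::comm_ring_1 poly poly set"
  assumes "f \<in> L"
    and regular: "\<And>n w. w \<in> ideal_pow L n \<Longrightarrow> f * w \<in> ideal_pow L (Suc (Suc n)) \<Longrightarrow>
                    w \<in> ideal_pow L (Suc n)"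
  shows "gr_depth_pos L"
proof -
  define z where "z n = (if n = 1 then f else 0)" for n :: nat
  have "{n. z n \<noteq> 0} \<subseteq> {1}"
    by (auto simp: z_def)
  then have "gr_elem L z"
    unfolding gr_elem_def using mem_ideal_pow_1[OF assms(1)]
    by (auto simp: z_def zero_in_ideal_pow intro: finite_subset)
  then have "z \<in> gr_max_ideal L"
    by (simp add: gr_max_ideal_def z_def ideal_gen_zero)
  moreover have "gr_zero L w" if w: "gr_elem L w" "gr_zero L (gr_mult z w)" for w
    unfolding gr_zero_def
  proof
    fix n
    have "gr_mult z w (Suc n) = (\<Sum>i\<le>Suc n. if i = 1 then f * w (Suc n - 1) else 0)"
      unfolding gr_mult_def z_def by (intro sum.cong) auto
    then have "gr_mult z w (Suc n) = f * w n"
      by simp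
    moreover have "gr_mult z w (Suc n) \<in> ideal_pow L (Suc (Suc n))"
      using w(2) unfolding gr_zero_def by blast
    moreover have "w n \<in> ideal_pow L n"
      using w(1) unfolding gr_elem_def by blast
    ultimately show "w n \<in> ideal_pow L (Suc n)"
      using regular by simp
  qed
  ultimately show ?thesis
    unfolding gr_depth_pos_def by blast
qed

theorem proposition4p1:
  fixes d i :: nat and a :: "nat \<Rightarrow> nat" and L :: "'k::{alg_closed_field, field_char_0} poly poly set"
  assumes "a 0 = 0"
    and "\<And>j. j < d \<Longrightarrow> a j < a (Suc j)"
    and "L = ideal_gen {varX ^ (d - j) * varY ^ (a j) | j. j \<le> d}"
    and "i \<le> d"
    and "ideal_pow L 2 = ideal_prod (ideal_gen {varX ^ d, varX ^ (d - i) * varY ^ (a i), varY ^ (a d)}) L"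
  shows "gr_depth_pos L"
proof -
  define E where "E = up_closure ((\<lambda>j. (d - j, a j)) ` {..d})"
  have "upclosed E"
    by (simp add: E_def upclosed_up_closure)
  have gens: "E d 0" "E (d - i) (a i)" "E 0 (a d)"
    using assms(1,4) unfolding E_def up_closure_def by force+
  have L_gens: "{varX ^ (d - j) * varY ^ (a j) | j. j \<le> d}
      = (\<lambda>(p, q). varX ^ p * varY ^ q) ` (\<lambda>j. (d - j, a j)) ` {..d}"
    by auto
  have L: "L = monomial_ideal E"
    by (simp only: assms(3) L_gens E_def ideal_gen_monomials)
  have J_gens: "{varX ^ d, varX ^ (d - i) * varY ^ (a i), varY ^ (a d)}
      = (\<lambda>(p, q). varX ^ p * varY ^ q) ` {(d, 0), (d - i, a i), (0, a d)}"
    by simp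
  have "ideal_pow L 2 = ideal_prod (monomial_ideal (up_closure {(d, 0), (d - i, a i), (0, a d)})) L"
    by (simp only: assms(5) J_gens ideal_gen_monomials)
  then have pow: "ideal_pow L (Suc n)
      = monomial_ideal (exp_sum (triple_pow_exps d (d - i) (a i) (a d) n) E)" for n
    unfolding L by (rule ideal_pow_Suc_monomial_ideal[OF \<open>upclosed E\<close>])
  show ?thesis
  proof (rule gr_depth_pos_if_initial_form_regular)
    show "varX ^ d + varY ^ a d \<in> L"
      using gens by (auto simp: L monomial_ideal_def varX_pow varY_pow coeff2_monom2)
    show "\<And>n w. w \<in> ideal_pow L n \<Longrightarrow> (varX ^ d + varY ^ a d) * w \<in> ideal_pow L (Suc (Suc n)) \<Longrightarrow>
        w \<in> ideal_pow L (Suc n)"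
      using triple_pow_exps_colon_binomial[OF \<open>upclosed E\<close> gens] unfolding pow by blast
  qed
qed

end
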